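(* Let $q=12n+1$ be a prime power and let $C^6$ be the subgroup of index $6$ of the multiplicative group $\mathbb{F}_q^*$. Assume there is a $16$-tuple $(a_1,\dots,a_{16})$ of elements of $\mathbb{F}_q^*$ such that: (i) each of the four lists $\Delta_{0,0}=(a_1-a_2,\ a_5-a_6,\ a_{10}-a_{11},\ a_{10}-a_{12},\ a_{11}-a_{12},\ a_{15}-a_{16})$, $\Delta_{0,1}=(a_1-a_3,\ a_2-a_3,\ a_5-a_7,\ a_6-a_7,\ a_{14}-a_{15},\ a_{14}-a_{16})$, $\Delta_{1,0}=(a_1-a_4,\ a_2-a_4,\ a_5-a_8,\ a_6-a_8,\ a_{13}-a_{15},\ a_{13}-a_{16})$, $\Delta_{1,1}=(a_3-a_4,\ a_7-a_8,\ a_9-a_{10},\ a_9-a_{11},\ a_9-a_{12},\ a_{13}-a_{14})$ is a complete system of representatives for the cosets of $C^6$ in $\mathbb{F}_q^*$ (i.e. its six entries lie in six distinct cosets); and (ii) each of the four lists $U_{0,0}=(a_1,a_2,a_5,a_6,a_9)$, $U_{0,1}=(a_3,a_7,a_{13})$, $U_{1,0}=(a_4,a_8,a_{14})$, $U_{1,1}=(a_{10},a_{11},a_{12},a_{15},a_{16})$ is a partial system of representatives for the cosets of $C^6$ in $\mathbb{F}_q^*$ distinct from $C^6$ (i.e. its entries lie in pairwise distinct cosets, none of which is $C^6$). Then there exists a nested $(4q,4,1)$-BIBD.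
   Context: A $(v,k,\lambda)$-BIBD is a set $X$ of $v$ points with a multiset $\mathcal{A}$ of $k$-subsets such that every pair of distinct points lies in exactly $\lambda$ blocks (partial: at most $\lambda$). A $(v,4,1)$-BIBD is nested if there is a map $\phi:\mathcal{A}\to X$ such that $\{A\cup\{\phi(A)\}:A\in\mathcal{A}\}$ is the block multiset of a partial $(v,5,2)$-BIBD on $X$ (in particular $\phi(A)\notin A$). *)

theory Defs
  imports Main "HOL-Library.Multiset" "HOL-Library.Cardinality"
begin

definition pair_count :: "'p set multiset \<Rightarrow> 'p \<Rightarrow> 'p \<Rightarrow> nat" where
  "pair_count B x y = size (filter_mset (\<lambda>A. x \<in> A \<and> y \<in> A) B)"

definition partial_bibd :: "'p set \<Rightarrow> 'p set multiset \<Rightarrow> nat \<Rightarrow> nat \<Rightarrow> nat \<Rightarrow> bool" where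
  "partial_bibd X B v k lam \<longleftrightarrow> finite X \<and> card X = v \<and>
     (\<forall>A \<in># B. A \<subseteq> X \<and> card A = k) \<and>
     (\<forall>x\<in>X. \<forall>y\<in>X. x \<noteq> y \<longrightarrow> pair_count B x y \<le> lam)"

definition bibd :: "'p set \<Rightarrow> 'p set multiset \<Rightarrow> nat \<Rightarrow> nat \<Rightarrow> nat \<Rightarrow> bool" where
  "bibd X B v k lam \<longleftrightarrow> finite X \<and> card X = v \<and>
     (\<forall>A \<in># B. A \<subseteq> X \<and> card A = k) \<and>
     (\<forall>x\<in>X. \<forall>y\<in>X. x \<noteq> y \<longrightarrow> pair_count B x y = lam)"

definition nested_bibd :: "'p set \<Rightarrow> 'p set multiset \<Rightarrow> nat \<Rightarrow> bool" where
  "nested_bibd X B v \<longleftrightarrow> bibd X B v 4 1 \<and>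
     (\<exists>\<phi>. (\<forall>A \<in># B. \<phi> A \<in> X \<and> \<phi> A \<notin> A) \<and>
          partial_bibd X (image_mset (\<lambda>A. insert (\<phi> A) A) B) v 5 2)"

text \<open>The subgroup of index 6 of the multiplicative group of a finite field
  with q = 1 mod 6 (cyclic group): the nonzero sixth powers.\<close>

definition C6 :: "'a::{finite,field} set" where
  "C6 = {x. \<exists>y. y \<noteq> 0 \<and> x = y ^ 6}"

definition coset6 :: "'a::{finite,field} \<Rightarrow> 'a set" where
  "coset6 x = (\<lambda>c. x * c) ` C6"

definition complete_rep6 :: "'a::{finite,field} list \<Rightarrow> bool" where
  "complete_rep6 L \<longleftrightarrow> length L = 6 \<and> (\<forall>x \<in> set L. x \<noteq> 0) \<and> distinct (map coset6 L)"

definition partial_rep6 :: "'a::{finite,field} list \<Rightarrow> bool" where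
  "partial_rep6 L \<longleftrightarrow> (\<forall>x \<in> set L. x \<noteq> 0 \<and> coset6 x \<noteq> C6) \<and> distinct (map coset6 L)"

end

theory Submission
  imports Defs "HOL-Algebra.Multiplicative_Group" "HOL-Library.Z2" "HOL-Library.Product_Plus"
begin

text \<open>
  The design lives on \<open>\<bbbF>\<^sub>q \<times> (\<int>\<^sub>2 \<times> \<int>\<^sub>2)\<close>. The element \<open>a\<^sub>k\<close> is lifted to the point \<open>(a\<^sub>k, c)\<close>,
  where \<open>c\<close> is the index of the list \<open>U\<^sub>c\<close> that contains \<open>a\<^sub>k\<close>, and the four base blocks are
  \<open>{a\<^sub>1, \<dots>, a\<^sub>4}\<close>, \<open>{a\<^sub>5, \<dots>, a\<^sub>8}\<close>, \<open>{a\<^sub>9, \<dots>, a\<^sub>1\<^sub>2}\<close>, \<open>{a\<^sub>1\<^sub>3, \<dots>, a\<^sub>1\<^sub>6}\<close>.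
  Since \<open>12\<close> divides \<open>q - 1\<close>, \<open>-1 \<in> C\<^sup>6\<close>; fix a set \<open>M\<close> of representatives of
  \<open>C\<^sup>6\<close> modulo \<open>\<plusminus>1\<close>. The blocks are the translates \<open>p + m B\<^sub>j\<close> (\<open>m \<in> M\<close>) together with the
  \<open>q\<close> columns \<open>{t} \<times> \<int>\<^sub>2\<^sup>2\<close>.

  Two points with different first coordinates differ by some \<open>(d, c)\<close> with \<open>d \<noteq> 0\<close>. The index
  pairs inside base blocks whose labels differ by \<open>c\<close> are exactly those of \<open>\<Delta>\<^sub>c\<close>, whose
  differences meet every coset of \<open>C\<^sup>6\<close> once; with the sign absorbed by \<open>\<plusminus>M\<close>, exactly one
  block \<open>m B\<^sub>j\<close> realises the difference \<open>(d, c)\<close>, and exactly once. Hence every pair lies in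
  exactly one block. The block \<open>p + m B\<^sub>j\<close> is nested by \<open>p\<close>, the column \<open>{t} \<times> \<int>\<^sub>2\<^sup>2\<close> by
  \<open>(t + 1, 0)\<close>, so a block point differs from the nesting point by \<open>(m a\<^sub>k, c)\<close> or by
  \<open>(-1, h)\<close>. As the \<open>U\<^sub>c\<close> represent distinct cosets other than \<open>C\<^sup>6 \<ni> \<plusminus>1\<close>, these
  offsets determine the block and no two of them are opposite; so a pair of points occurs at
  most once as (nesting point, block point), and the extended blocks form a partial
  \<open>(4q, 5, 2)\<close>-design.
\<close>

section \<open>Sixth-power classes in a finite field\<close>

lemma C6_nonzero: "x \<in> C6 \<Longrightarrow> x \<noteq> 0"
  by (auto simp: C6_def)

lemma one_in_C6 [simp]: "1 \<in> C6"
  unfolding C6_def by (rule CollectI, rule exI[of _ 1]) simp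

lemma power6_in_C6: "y \<noteq> 0 \<Longrightarrow> y ^ 6 \<in> C6"
  by (auto simp: C6_def)

lemma C6_mult: "x \<in> C6 \<Longrightarrow> y \<in> C6 \<Longrightarrow> x * y \<in> C6"
  by (auto simp: C6_def) (metis no_zero_divisors power_mult_distrib)

lemma C6_inverse: "x \<in> C6 \<Longrightarrow> inverse x \<in> C6"
  by (auto simp: C6_def) (metis inverse_nonzero_iff_nonzero power_inverse)

lemma C6_mult_image:
  fixes u :: "'a::{finite,field}"
  shows "u \<in> C6 \<Longrightarrow> (*) u ` C6 = C6"
proof
  assume u: "u \<in> C6"
  show "C6 \<subseteq> (*) u ` C6"
  proof
    fix c :: 'a assume "c \<in> C6"
    moreover have "u \<noteq> 0" using u C6_nonzero by blast
    ultimately have "c = u * (inverse u * c)" "inverse u * c \<in> C6"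
      using u C6_inverse C6_mult by (auto simp flip: mult.assoc)
    then show "c \<in> (*) u ` C6" by blast
  qed
qed (use C6_mult in auto)

lemma coset6_mult_C6:
  assumes "u \<in> C6" shows "coset6 (u * x) = coset6 x"
proof -
  have "coset6 (u * x) = (*) x ` ((*) u ` C6)"
    unfolding coset6_def image_image by (simp add: ac_simps)
  also have "\<dots> = coset6 x" using C6_mult_image[OF assms] by (simp only: coset6_def)
  finally show ?thesis .
qed

lemma coset6_of_C6: "u \<in> C6 \<Longrightarrow> coset6 u = C6"
  using coset6_mult_C6[of u 1] by (simp add: coset6_def)

lemma mem_coset6_self: "x \<in> coset6 x"
  unfolding coset6_def by (rule image_eqI[of _ _ 1]) simp_all

lemma finite_field_generator:
  obtains g :: "'a::{finite,field}"
  where "\<And>x. x \<noteq> 0 \<Longrightarrow> \<exists>i. x = g ^ i" and "\<And>m. g ^ m = 1 \<longleftrightarrow> (CARD('a) - 1) dvd m"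
proof -
  define R :: "'a ring" where "R = \<lparr>carrier = UNIV, mult = (*), one = 1, zero = 0, add = (+)\<rparr>"
  let ?G = "Multiplicative_Group.mult_of R"
  have "field R"
  proof -
    have "\<exists>y. x + y = 0" for x :: 'a by (rule exI[of _ "- x"]) simp
    moreover have "\<exists>y. x * y = 1" if "x \<noteq> 0" for x :: 'a
      by (rule exI[of _ "inverse x"]) (simp add: that)
    ultimately show ?thesis unfolding R_def by unfold_locales (auto simp: algebra_simps Units_def)
  qed
  then interpret field R .
  interpret G: group ?G by (rule field_mult_group)
  have R_simps [simp]: "carrier R = UNIV" "\<zero>\<^bsub>R\<^esub> = 0" "\<one>\<^bsub>R\<^esub> = 1"
    by (simp_all add: R_def)
  have pow [simp]: "x [^]\<^bsub>R\<^esub> n = x ^ n" for x :: 'a and n :: nat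
    by (induction n) (simp_all add: R_def)
  obtain g where g: "g \<in> carrier ?G"
    and gen: "carrier ?G = {g [^]\<^bsub>R\<^esub> i | i::nat. i \<in> UNIV}"
    using finite_field_mult_group_has_gen by auto
  have fin: "finite (carrier ?G)" by simp
  have card_G: "card (carrier ?G) = CARD('a) - 1"
    by (simp add: card_Diff_singleton)
  have "carrier ?G = (\<lambda>i. g ^ i) ` {0..G.ord g - 1}"
    using G.ord_elems[OF fin g] gen by (auto simp: Multiplicative_Group.nat_pow_mult_of)
  then have "card (carrier ?G) \<le> G.ord g"
    using card_image_le[of "{0..G.ord g - 1}" "\<lambda>i. g ^ i"] G.ord_ge_1[OF fin g] by simp
  moreover have "G.ord g \<le> card (carrier ?G)"
    using G.ord_le_group_order[OF fin g] unfolding Coset.order_def .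
  ultimately have "G.ord g = CARD('a) - 1" using card_G by simp
  then have "g ^ m = 1 \<longleftrightarrow> (CARD('a) - 1) dvd m" for m
    using G.pow_eq_id[OF g, of m] by (simp add: Multiplicative_Group.nat_pow_mult_of)
  moreover have "\<exists>i. x = g ^ i" if "x \<noteq> 0" for x
    using that gen by (auto simp: Multiplicative_Group.nat_pow_mult_of)
  ultimately show thesis using that by blast
qed

lemma minus_one_in_C6:
  assumes q: "CARD('a::{finite,field}) = 12 * n + 1"
  shows "(-1::'a) \<in> C6" and "(-1::'a) \<noteq> 1"
proof -
  obtain g :: 'a where order: "\<And>m. g ^ m = 1 \<longleftrightarrow> 12 * n dvd m"
    using finite_field_generator q by (metis add_diff_cancel_right')
  have "card {0::'a, 1} \<le> CARD('a)" by (rule card_mono) simp_all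
  then have "n > 0" using q by simp
  define h where "h = g ^ (6 * n)"
  have "h ^ 2 = 1"
    using order[of "12 * n"] by (simp add: h_def flip: power_mult)
  moreover have "h \<noteq> 1"
    using order[of "6 * n"] \<open>n > 0\<close> by (auto simp: h_def dest: dvd_imp_le)
  ultimately have h: "h = -1" by (simp add: power2_eq_1_iff)
  have "g \<noteq> 0" using order[of "12 * n"] \<open>n > 0\<close> by (auto simp: power_0_left)
  then show "(-1::'a) \<in> C6"
    using power6_in_C6[of "g ^ n"] by (simp add: h_def flip: h power_mult mult.commute)
  show "(-1::'a) \<noteq> 1" using h \<open>h \<noteq> 1\<close> by simp
qed

lemma card_coset6_image_le: "card (coset6 ` (UNIV - {0::'a::{finite,field}})) \<le> 6"
proof -
  obtain g :: 'a where gen: "\<And>x. x \<noteq> 0 \<Longrightarrow> \<exists>i. x = g ^ i"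
    using finite_field_generator by metis
  have sub: "coset6 ` (UNIV - {0}) \<subseteq> (\<lambda>r. coset6 (g ^ r)) ` {..<6}"
  proof
    fix C :: "'a set" assume "C \<in> coset6 ` (UNIV - {0})"
    then obtain i where C: "C = coset6 (g ^ i)" and "g ^ i \<noteq> 0" using gen by blast
    then have "g ^ (i div 6) \<noteq> 0" by (auto simp: power_eq_0_iff)
    moreover have "g ^ i = (g ^ (i div 6)) ^ 6 * g ^ (i mod 6)"
      by (simp flip: power_mult power_add)
    ultimately have "C = coset6 (g ^ (i mod 6))"
      using C coset6_mult_C6[OF power6_in_C6[of "g ^ (i div 6)"], of "g ^ (i mod 6)"] by simp
    then show "C \<in> (\<lambda>r. coset6 (g ^ r)) ` {..<6}" by simp
  qed
  have "card (coset6 ` (UNIV - {0::'a})) \<le> card ((\<lambda>r. coset6 (g ^ r)) ` {..<6::nat})"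
    by (rule card_mono) (simp_all add: sub)
  also have "\<dots> \<le> card {..<6::nat}" by (rule card_image_le) simp
  finally show ?thesis by simp
qed

lemma complete_rep6_covers:
  assumes L: "complete_rep6 L" and "d \<noteq> 0"
  shows "\<exists>x\<in>set L. coset6 d = coset6 x"
proof -
  have "coset6 ` set L \<subseteq> coset6 ` (UNIV - {0})"
    using L by (auto simp: complete_rep6_def)
  moreover have "card (coset6 ` set L) = 6"
    using L distinct_card[of "map coset6 L"] by (simp add: complete_rep6_def)
  ultimately have "coset6 ` set L = coset6 ` (UNIV - {0})"
    using card_coset6_image_le by (intro card_seteq) auto
  then have "coset6 d \<in> coset6 ` set L" using \<open>d \<noteq> 0\<close> by blast
  then show ?thesis by auto
qed

lemma ex_sign_representatives:
  fixes S :: "'a::group_add set"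
  assumes neg: "\<And>c. c \<in> S \<Longrightarrow> -c \<in> S" and no_fix: "\<And>c. c \<in> S \<Longrightarrow> -c \<noteq> c"
  obtains M where "M \<subseteq> S" "\<And>c. c \<in> S \<Longrightarrow> c \<in> M \<or> -c \<in> M" "\<And>c. c \<in> M \<Longrightarrow> -c \<notin> M"
proof -
  define pick where "pick c = (SOME z. z \<in> {c, -c})" for c :: 'a
  have pick: "pick c \<in> {c, -c}" for c
    unfolding pick_def by (rule someI[of _ c]) simp
  have pick_neg: "pick (-c) = pick c" for c
    by (simp add: pick_def insert_commute)
  define M where "M = {c \<in> S. pick c = c}"
  show thesis
  proof (rule that[of M])
    show "c \<in> M \<or> -c \<in> M" if "c \<in> S" for c
      using pick[of c] pick_neg[of c] neg[OF that] that by (auto simp: M_def)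
    show "-c \<notin> M" if "c \<in> M" for c
    proof
      assume "-c \<in> M"
      then have "-c = c" using that pick_neg[of c] by (simp add: M_def)
      then show False using that no_fix by (simp add: M_def)
    qed
  qed (auto simp: M_def)
qed

lemma C6_sign_representatives:
  assumes minus_one: "(-1::'a) \<in> C6" and "(-1::'a) \<noteq> 1"
  obtains M :: "'a::{finite,field} set" where "M \<subseteq> C6" "\<And>c. c \<in> C6 \<Longrightarrow> c \<in> M \<or> -c \<in> M" "\<And>c. c \<in> M \<Longrightarrow> -c \<notin> M"
proof (rule ex_sign_representatives)
  show "-c \<in> C6" if "c \<in> C6" for c :: 'a
    using C6_mult[OF minus_one that] by simp
  show "-c \<noteq> c" if "c \<in> C6" for c :: 'a
  proof
    assume "-c = c"
    then have "(-1) * c = 1 * c" by simp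
    then show False using assms(2) C6_nonzero[OF that] by simp
  qed
qed (rule that)

section \<open>Designs from indexed families of blocks\<close>

lemma pair_count_image_mset_set:
  "finite I \<Longrightarrow> pair_count (image_mset f (mset_set I)) x y = card {i \<in> I. x \<in> f i \<and> y \<in> f i}"
  unfolding pair_count_def by (simp add: filter_mset_image_mset)

lemma card_le_1_if_unique:
  assumes "finite I"
    and unique: "\<And>i i'. i \<in> I \<Longrightarrow> i' \<in> I \<Longrightarrow> P i \<Longrightarrow> P i' \<Longrightarrow> i = i'"
  shows "card {i \<in> I. P i} \<le> 1"
  using assms(1) by (simp add: card_le_Suc0_iff_eq) (use unique in blast)

lemma bibd_of_indexed_blocks:
  assumes fin: "finite I" "finite V" and v: "card V = v"
    and blk: "\<And>i. i \<in> I \<Longrightarrow> blk i \<subseteq> V \<and> card (blk i) = k"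
    and cover: "\<And>x y. x \<in> V \<Longrightarrow> y \<in> V \<Longrightarrow> x \<noteq> y \<Longrightarrow> \<exists>i\<in>I. x \<in> blk i \<and> y \<in> blk i"
    and unique: "\<And>x y i i'. x \<noteq> y \<Longrightarrow> i \<in> I \<Longrightarrow> i' \<in> I \<Longrightarrow>
      x \<in> blk i \<Longrightarrow> y \<in> blk i \<Longrightarrow> x \<in> blk i' \<Longrightarrow> y \<in> blk i' \<Longrightarrow> i = i'"
  shows "bibd V (image_mset blk (mset_set I)) v k 1"
proof -
  have "card {i \<in> I. x \<in> blk i \<and> y \<in> blk i} = 1"
    if xy: "x \<in> V" "y \<in> V" "x \<noteq> y" for x y
  proof -
    obtain i where "i \<in> I" "x \<in> blk i" "y \<in> blk i" using cover xy by blast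
    then have "{i \<in> I. x \<in> blk i \<and> y \<in> blk i} = {i}" using unique[OF \<open>x \<noteq> y\<close>] by blast
    then show ?thesis by simp
  qed
  then show ?thesis
    using fin v blk by (auto simp: bibd_def pair_count_image_mset_set)
qed

lemma inj_on_indexed_blocks:
  assumes "\<And>i. i \<in> I \<Longrightarrow> finite (blk i) \<and> 2 \<le> card (blk i)"
    and unique: "\<And>x y i i'. x \<noteq> y \<Longrightarrow> i \<in> I \<Longrightarrow> i' \<in> I \<Longrightarrow>
      x \<in> blk i \<Longrightarrow> y \<in> blk i \<Longrightarrow> x \<in> blk i' \<Longrightarrow> y \<in> blk i' \<Longrightarrow> i = i'"
  shows "inj_on blk I"
proof (rule inj_onI)
  fix i i' assume i: "i \<in> I" "i' \<in> I" "blk i = blk i'"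
  have "\<not> card (blk i) \<le> Suc 0" "finite (blk i)" using assms(1)[OF i(1)] by auto
  then obtain x y where "x \<in> blk i" "y \<in> blk i" "x \<noteq> y"
    by (auto simp: card_le_Suc0_iff_eq)
  then show "i = i'" using unique i by metis
qed

lemma nested_bibd_of_indexed_blocks:
  fixes blk :: "'i \<Rightarrow> 'p set" and nest :: "'i \<Rightarrow> 'p"
  assumes fin: "finite I" "finite V" and v: "card V = v"
    and blk: "\<And>i. i \<in> I \<Longrightarrow> blk i \<subseteq> V \<and> card (blk i) = 4"
    and nest: "\<And>i. i \<in> I \<Longrightarrow> nest i \<in> V \<and> nest i \<notin> blk i"
    and cover: "\<And>x y. x \<in> V \<Longrightarrow> y \<in> V \<Longrightarrow> x \<noteq> y \<Longrightarrow> \<exists>i\<in>I. x \<in> blk i \<and> y \<in> blk i"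
    and unique: "\<And>x y i i'. x \<noteq> y \<Longrightarrow> i \<in> I \<Longrightarrow> i' \<in> I \<Longrightarrow>
      x \<in> blk i \<Longrightarrow> y \<in> blk i \<Longrightarrow> x \<in> blk i' \<Longrightarrow> y \<in> blk i' \<Longrightarrow> i = i'"
    and nest_unique: "\<And>x y i i'. i \<in> I \<Longrightarrow> i' \<in> I \<Longrightarrow> nest i = x \<Longrightarrow> y \<in> blk i \<Longrightarrow>
      nest i' = x \<and> y \<in> blk i' \<or> nest i' = y \<and> x \<in> blk i' \<Longrightarrow> i = i'"
  shows "nested_bibd V (image_mset blk (mset_set I)) v"
proof -
  have blk_finite: "finite (blk i)" if "i \<in> I" for i
    using blk[OF that] fin(2) finite_subset by blast
  have inj: "inj_on blk I"
    using blk_finite blk unique by (intro inj_on_indexed_blocks) auto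
  define \<phi> where "\<phi> A = nest (the_inv_into I blk A)" for A
  have \<phi>: "\<phi> (blk i) = nest i" if "i \<in> I" for i
    using the_inv_into_f_f[OF inj that] by (simp add: \<phi>_def)
  let ?ext = "\<lambda>i. insert (nest i) (blk i)"
  have ext: "image_mset (\<lambda>A. insert (\<phi> A) A) (image_mset blk (mset_set I)) = image_mset ?ext (mset_set I)"
    unfolding multiset.map_comp by (rule image_mset_cong) (simp add: \<phi> fin)
  have "card {i \<in> I. x \<in> ?ext i \<and> y \<in> ?ext i} \<le> 2" if "x \<noteq> y" for x y
  proof -
    let ?B = "{i \<in> I. x \<in> blk i \<and> y \<in> blk i}"
    let ?N = "{i \<in> I. nest i = x \<and> y \<in> blk i \<or> nest i = y \<and> x \<in> blk i}"
    have "card {i \<in> I. x \<in> ?ext i \<and> y \<in> ?ext i} \<le> card (?B \<union> ?N)"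
      using fin that by (intro card_mono) auto
    also have "\<dots> \<le> card ?B + card ?N" by (rule card_Un_le)
    also have "\<dots> \<le> 1 + 1"
    proof (rule add_mono)
      show "card ?B \<le> 1"
        using unique[OF that] by (intro card_le_1_if_unique[OF fin(1)]) blast
      show "card ?N \<le> 1"
        using nest_unique by (intro card_le_1_if_unique[OF fin(1)]) metis
    qed
    finally show ?thesis by simp
  qed
  then have "partial_bibd V (image_mset ?ext (mset_set I)) v 5 2"
    using fin v blk nest by (auto simp: partial_bibd_def pair_count_image_mset_set blk_finite)
  moreover have "bibd V (image_mset blk (mset_set I)) v 4 1"
    using bibd_of_indexed_blocks[OF fin v blk cover unique] .
  moreover have "\<forall>A \<in># image_mset blk (mset_set I). \<phi> A \<in> V \<and> \<phi> A \<notin> A"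
    using nest \<phi> fin by auto
  ultimately show ?thesis
    unfolding nested_bibd_def ext[symmetric] by blast
qed

lemma pair_count_image:
  assumes "inj_on f V" "\<forall>A \<in># B. A \<subseteq> V" "x \<in> V" "y \<in> V"
  shows "pair_count (image_mset ((`) f) B) (f x) (f y) = pair_count B x y"
proof -
  have "filter_mset (\<lambda>A. f x \<in> f ` A \<and> f y \<in> f ` A) B = filter_mset (\<lambda>A. x \<in> A \<and> y \<in> A) B"
    using assms by (intro filter_mset_cong) (auto simp: inj_on_image_mem_iff)
  then show ?thesis unfolding pair_count_def by (simp add: filter_mset_image_mset)
qed

lemma design_conditions_image:
  assumes f: "bij_betw f V W" and B: "\<forall>A \<in># B. A \<subseteq> V \<and> card A = k"
    and pairs: "\<forall>x\<in>V. \<forall>y\<in>V. x \<noteq> y \<longrightarrow> P (pair_count B x y)"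
  shows "\<forall>A \<in># image_mset ((`) f) B. A \<subseteq> W \<and> card A = k"
    and "\<forall>x\<in>W. \<forall>y\<in>W. x \<noteq> y \<longrightarrow> P (pair_count (image_mset ((`) f) B) x y)"
proof -
  have inj: "inj_on f V" and W: "W = f ` V"
    using f by (auto simp: bij_betw_def)
  show "\<forall>A \<in># image_mset ((`) f) B. A \<subseteq> W \<and> card A = k"
    using B inj W by (auto simp: card_image inj_on_subset)
  show "\<forall>x\<in>W. \<forall>y\<in>W. x \<noteq> y \<longrightarrow> P (pair_count (image_mset ((`) f) B) x y)"
    using B pairs inj W pair_count_image[OF inj] by auto
qed

lemma bibd_image:
  assumes "bij_betw f V W" "bibd V B v k lam"
  shows "bibd W (image_mset ((`) f) B) v k lam"
  using assms design_conditions_image[OF assms(1), of B k "\<lambda>c. c = lam"]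
  by (auto simp: bibd_def bij_betw_finite bij_betw_same_card)

lemma partial_bibd_image:
  assumes "bij_betw f V W" "partial_bibd V B v k lam"
  shows "partial_bibd W (image_mset ((`) f) B) v k lam"
  using assms design_conditions_image[OF assms(1), of B k "\<lambda>c. c \<le> lam"]
  by (auto simp: partial_bibd_def bij_betw_finite bij_betw_same_card)

lemma nested_bibd_image:
  assumes f: "bij_betw f V W" and nested: "nested_bibd V B v"
  shows "nested_bibd W (image_mset ((`) f) B) v"
proof -
  obtain \<phi> where \<phi>: "\<forall>A \<in># B. \<phi> A \<in> V \<and> \<phi> A \<notin> A"
    and ext: "partial_bibd V (image_mset (\<lambda>A. insert (\<phi> A) A) B) v 5 2"
    using nested by (auto simp: nested_bibd_def)
  have bibd: "bibd V B v 4 1" using nested by (simp add: nested_bibd_def)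
  have inj: "inj_on f V" and W: "W = f ` V"
    using f by (auto simp: bij_betw_def)
  have B_sub: "A \<subseteq> V" if "A \<in># B" for A using bibd that by (simp add: bibd_def)
  define \<psi> where "\<psi> A' = f (\<phi> (inv_into V f ` A'))" for A'
  have \<psi>: "\<psi> (f ` A) = f (\<phi> A)" if "A \<in># B" for A
    using B_sub[OF that] inj by (simp add: \<psi>_def)
  have "image_mset (\<lambda>A'. insert (\<psi> A') A') (image_mset ((`) f) B)
      = image_mset ((`) f) (image_mset (\<lambda>A. insert (\<phi> A) A) B)"
    unfolding multiset.map_comp by (rule image_mset_cong) (simp add: \<psi>)
  then have "partial_bibd W (image_mset (\<lambda>A'. insert (\<psi> A') A') (image_mset ((`) f) B)) v 5 2"
    using partial_bibd_image[OF f ext] by simp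
  moreover have "\<forall>A' \<in># image_mset ((`) f) B. \<psi> A' \<in> W \<and> \<psi> A' \<notin> A'"
    using \<phi> \<psi> B_sub W inj by (auto simp: inj_on_image_mem_iff)
  ultimately show ?thesis
    using bibd_image[OF f bibd] by (auto simp: nested_bibd_def)
qed

section \<open>The base blocks\<close>

lemma UNIV_bit: "(UNIV :: bit set) = {0, 1}"
  using bit.exhaust by auto

instance bit :: finite
  by standard (simp add: UNIV_bit)

lemma CARD_bit [simp]: "CARD(bit) = 2"
  by (simp add: UNIV_bit)

lemma bit_pair_cases: "(c :: bit \<times> bit) \<in> {(0, 0), (0, 1), (1, 0), (1, 1)}"
proof (cases c)
  case (Pair x y)
  show ?thesis unfolding Pair by (cases x; cases y) simp_all
qed

lemma uminus_bit_pair [simp]: "- (c :: bit \<times> bit) = c"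
  by (cases c) simp

text \<open>Indices \<open>k\<close> stand for the paper's \<open>a\<^sub>k\<close>: \<open>label k = c\<close> iff \<open>a\<^sub>k\<close> belongs to \<open>U\<^sub>c\<close>,
  \<open>diff_pairs c\<close> lists the index pairs of \<open>\<Delta>\<^sub>c\<close>, and \<open>base_block j\<close> is the \<open>j\<close>-th base block.\<close>

definition label :: "nat \<Rightarrow> bit \<times> bit" where
  "label k = (if k \<in> {3, 7, 13} then (0, 1) else if k \<in> {4, 8, 14} then (1, 0)
     else if k \<in> {10, 11, 12, 15, 16} then (1, 1) else (0, 0))"

definition base_block :: "nat \<Rightarrow> nat set" where
  "base_block j = {4 * j + 1, 4 * j + 2, 4 * j + 3, 4 * j + 4}"

definition diff_pairs :: "bit \<times> bit \<Rightarrow> (nat \<times> nat) list" where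
  "diff_pairs c =
    (if c = (0, 0) then [(1, 2), (5, 6), (10, 11), (10, 12), (11, 12), (15, 16)]
     else if c = (0, 1) then [(1, 3), (2, 3), (5, 7), (6, 7), (14, 15), (14, 16)]
     else if c = (1, 0) then [(1, 4), (2, 4), (5, 8), (6, 8), (13, 15), (13, 16)]
     else [(3, 4), (7, 8), (9, 10), (9, 11), (9, 12), (13, 14)])"

definition label_class :: "bit \<times> bit \<Rightarrow> nat list" where
  "label_class c = filter (\<lambda>k. label k = c) [1..<17]"

lemma label_class_simps:
  "label_class (0, 0) = [1, 2, 5, 6, 9]" "label_class (0, 1) = [3, 7, 13]"
  "label_class (1, 0) = [4, 8, 14]" "label_class (1, 1) = [10, 11, 12, 15, 16]"
  by (simp_all add: label_class_def upt_rec label_def)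

lemma card_base_block: "card (base_block j) = 4"
  by (simp add: base_block_def)

lemma base_block_disjoint: "k \<in> base_block j \<Longrightarrow> k \<in> base_block j' \<Longrightarrow> j = j'"
  by (auto simp: base_block_def)

lemma base_block_in_label_class: "j < 4 \<Longrightarrow> k \<in> base_block j \<Longrightarrow> k \<in> set (label_class (label k))"
  by (auto simp: label_class_def base_block_def)

lemma base_block_pair_in_diff_pairs:
  assumes "j < 4" "k \<in> base_block j" "l \<in> base_block j" "k \<noteq> l"
  shows "(k, l) \<in> set (diff_pairs (label k - label l)) \<or> (l, k) \<in> set (diff_pairs (label k - label l))"
proof -
  have "\<forall>j \<in> {0, 1, 2, 3}. \<forall>k \<in> base_block j. \<forall>l \<in> base_block j. k \<noteq> l \<longrightarrow>
      (k, l) \<in> set (diff_pairs (label k - label l)) \<or> (l, k) \<in> set (diff_pairs (label k - label l))"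
    by (simp add: base_block_def label_def diff_pairs_def zero_prod_def)
  moreover have "j \<in> {0, 1, 2, 3}" using assms(1) by auto
  ultimately show ?thesis using assms(2-4) by blast
qed

lemma diff_pairs_in_base_block:
  assumes "(k, l) \<in> set (diff_pairs c)"
  obtains j where "j < 4" "k \<in> base_block j" "l \<in> base_block j" "k \<noteq> l" "label k - label l = c"
proof -
  have "(k - 1) div 4 < 4 \<and> k \<in> base_block ((k - 1) div 4) \<and> l \<in> base_block ((k - 1) div 4) \<and>
      k \<noteq> l \<and> label k - label l = c"
    using assms bit_pair_cases[of c]
    by (auto simp: diff_pairs_def) (simp_all add: base_block_def label_def zero_prod_def)
  then show thesis using that by blast
qed

section \<open>Developing the base blocks\<close>

lemma translate_mem_iff: "(x::'b::ab_group_add) \<in> (+) p ` S \<longleftrightarrow> x - p \<in> S"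
  by (auto simp: image_iff) (metis diff_add_cancel add.commute)

datatype 'f block_index = Base nat 'f "'f \<times> bit \<times> bit" | Column 'f

locale nested_construction =
  fixes a :: "nat \<Rightarrow> 'a::{finite,field}" and M :: "'a set"
  assumes diffs_complete: "\<And>c. complete_rep6 (map (\<lambda>(k, l). a k - a l) (diff_pairs c))"
    and labels_partial: "\<And>c. partial_rep6 (map a (label_class c))"
    and minus_one_C6: "(-1::'a) \<in> C6"
    and M_subset: "M \<subseteq> C6"
    and M_cover: "\<And>c. c \<in> C6 \<Longrightarrow> c \<in> M \<or> -c \<in> M"
    and M_no_opposite: "\<And>c. c \<in> M \<Longrightarrow> -c \<notin> M"
begin

lemma minus_C6: "(c::'a) \<in> C6 \<Longrightarrow> -c \<in> C6"
  using C6_mult[OF minus_one_C6] by fastforce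

lemma coset6_uminus: "coset6 (- (x::'a)) = coset6 x"
  using coset6_mult_C6[OF minus_one_C6, of x] by simp

lemma M_nonzero: "m \<in> M \<Longrightarrow> m \<noteq> 0"
  using M_subset C6_nonzero by blast

lemma one_neq_minus_one: "(1::'a) \<noteq> -1"
proof
  assume eq: "(1::'a) = -1"
  show False
    using M_cover[OF one_in_C6] M_no_opposite[of 1] unfolding eq[symmetric] by blast
qed

lemma a_base_block:
  assumes "j < 4" "k \<in> base_block j"
  shows "a k \<noteq> 0" and "a k \<notin> C6"
proof -
  have "a k \<in> set (map a (label_class (label k)))"
    using base_block_in_label_class[OF assms] by simp
  then have "a k \<noteq> 0" "coset6 (a k) \<noteq> C6"
    using labels_partial[of "label k"] by (auto simp: partial_rep6_def)
  then show "a k \<noteq> 0" "a k \<notin> C6" using coset6_of_C6 by auto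
qed

lemma a_inj_base_block:
  assumes "j < 4" "k \<in> base_block j" "l \<in> base_block j" "k \<noteq> l"
  shows "a k \<noteq> a l"
proof -
  let ?c = "label k - label l"
  have "a k - a l \<in> set (map (\<lambda>(k, l). a k - a l) (diff_pairs ?c)) \<or>
      a l - a k \<in> set (map (\<lambda>(k, l). a k - a l) (diff_pairs ?c))"
    using base_block_pair_in_diff_pairs[OF assms] by force
  then show ?thesis using diffs_complete[of ?c] by (auto simp: complete_rep6_def)
qed

lemma index_eq_if_label_coset6_eq:
  assumes "j < 4" "k \<in> base_block j" "j' < 4" "k' \<in> base_block j'"
    and "label k = label k'" and "coset6 (a k) = coset6 (a k')"
  shows "k = k'"
proof -
  have "inj_on (coset6 \<circ> a) (set (label_class (label k)))"
    using labels_partial[of "label k"] by (simp add: partial_rep6_def distinct_map)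
  moreover have "k \<in> set (label_class (label k))" "k' \<in> set (label_class (label k))"
    using base_block_in_label_class[OF assms(1,2)] base_block_in_label_class[OF assms(3,4)] assms(5)
    by simp_all
  ultimately show ?thesis using assms(6) by (auto simp: inj_on_def)
qed

lemma pair_eq_if_label_diff_coset6_eq:
  assumes "j < 4" "k \<in> base_block j" "l \<in> base_block j" "k \<noteq> l"
    and "j' < 4" "k' \<in> base_block j'" "l' \<in> base_block j'" "k' \<noteq> l'"
    and "label k - label l = label k' - label l'" and "coset6 (a k - a l) = coset6 (a k' - a l')"
  shows "(k', l') = (k, l) \<or> (k', l') = (l, k)"
proof -
  let ?c = "label k - label l"
  let ?\<delta> = "\<lambda>(k, l). a k - a l"
  have inj: "inj_on (coset6 \<circ> ?\<delta>) (set (diff_pairs ?c))"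
    using diffs_complete[of ?c] by (simp add: complete_rep6_def distinct_map)
  have swap: "coset6 (?\<delta> (l, k)) = coset6 (?\<delta> (k, l))" for k l
    using coset6_uminus[of "a k - a l"] by simp
  obtain \<pi> where \<pi>: "\<pi> \<in> set (diff_pairs ?c)" "\<pi> \<in> {(k, l), (l, k)}"
    using base_block_pair_in_diff_pairs[OF assms(1-4)] by blast
  obtain \<pi>' where \<pi>': "\<pi>' \<in> set (diff_pairs ?c)" "\<pi>' \<in> {(k', l'), (l', k')}"
    using base_block_pair_in_diff_pairs[OF assms(5-8)] assms(9) by auto
  have "coset6 (?\<delta> \<pi>) = coset6 (?\<delta> \<pi>')"
    using \<pi>(2) \<pi>'(2) assms(10) swap by auto
  then have "\<pi> = \<pi>'" using inj \<pi>(1) \<pi>'(1) by (auto simp: inj_on_def)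
  then show ?thesis using \<pi>(2) \<pi>'(2) assms(4) by auto
qed

definition mult_block :: "nat \<Rightarrow> 'a \<Rightarrow> ('a \<times> bit \<times> bit) set" where
  "mult_block j m = (\<lambda>k. (m * a k, label k)) ` base_block j"

lemma mult_block_point_eq:
  assumes "j < 4" "k \<in> base_block j" "m \<in> C6" and "j' < 4" "k' \<in> base_block j'" "m' \<in> C6"
    and eq: "(m * a k, label k) = (m' * a k', label k')"
  shows "k = k' \<and> j = j' \<and> m = m'"
proof -
  have "coset6 (a k) = coset6 (a k')"
    using eq coset6_mult_C6[OF assms(3), of "a k"] coset6_mult_C6[OF assms(6), of "a k'"] by simp
  then have "k = k'"
    using index_eq_if_label_coset6_eq[OF assms(1,2,4,5)] eq by simp
  moreover have "j = j'" using \<open>k = k'\<close> assms(2,5) base_block_disjoint by blast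
  moreover have "m = m'" using \<open>k = k'\<close> eq a_base_block(1)[OF assms(1,2)] by simp
  ultimately show ?thesis by blast
qed

lemma mult_block_unique:
  assumes "j < 4" "m \<in> M" "u \<in> mult_block j m" and "j' < 4" "m' \<in> M" "u \<in> mult_block j' m'"
  shows "j = j' \<and> m = m'"
  using assms mult_block_point_eq M_subset unfolding mult_block_def by blast

lemma mult_block_not_opposite:
  assumes "j < 4" "m \<in> M" "u \<in> mult_block j m" and "j' < 4" "m' \<in> M" "- u \<in> mult_block j' m'"
  shows False
proof -
  obtain k k' where k: "k \<in> base_block j" "u = (m * a k, label k)"
    and k': "k' \<in> base_block j'" "- u = (m' * a k', label k')"
    using assms(3,6) by (auto simp: mult_block_def)
  have "((- m) * a k, label k) = (m' * a k', label k')" using k(2) k'(2) by simp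
  then have "- m = m'"
    using mult_block_point_eq[OF assms(1) k(1) _ assms(4) k'(1)] minus_C6 M_subset assms(2,5) by blast
  then show False using M_no_opposite assms(2,5) by blast
qed

lemma fst_mult_block_notin_C6:
  assumes "j < 4" "m \<in> M" "u \<in> mult_block j m"
  shows "fst u \<notin> C6"
proof
  assume "fst u \<in> C6"
  then obtain k where k: "k \<in> base_block j" "m * a k \<in> C6"
    using assms(3) by (auto simp: mult_block_def)
  have "m \<in> C6" using M_subset assms(2) by blast
  have "a k = inverse m * (m * a k)" using M_nonzero[OF assms(2)] by simp
  also have "\<dots> \<in> C6" using C6_mult[OF C6_inverse[OF \<open>m \<in> C6\<close>] k(2)] .
  finally show False using a_base_block(2)[OF assms(1) k(1)] by contradiction
qed

lemma mult_block_fst_inj: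
  assumes "j < 4" "m \<in> M" "u \<in> mult_block j m" "v \<in> mult_block j m" "fst u = fst v"
  shows "u = v"
proof -
  obtain k l where kl: "k \<in> base_block j" "l \<in> base_block j" "u = (m * a k, label k)" "v = (m * a l, label l)"
    using assms(3,4) by (auto simp: mult_block_def)
  then have "a k = a l" using assms(5) M_nonzero[OF assms(2)] by simp
  then have "k = l" using a_inj_base_block[OF assms(1) kl(1,2)] by blast
  then show ?thesis using kl by simp
qed

lemma card_mult_block:
  assumes "j < 4" "m \<in> M"
  shows "card (mult_block j m) = 4"
proof -
  have "inj_on (\<lambda>k. (m * a k, label k)) (base_block j)"
    using a_inj_base_block[OF assms(1)] M_nonzero[OF assms(2)] by (auto simp: inj_on_def)
  then show ?thesis by (simp add: mult_block_def card_image card_base_block)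
qed

lemma zero_notin_mult_block: "j < 4 \<Longrightarrow> m \<in> M \<Longrightarrow> 0 \<notin> mult_block j m"
  using a_base_block(1) M_nonzero by (auto simp: mult_block_def zero_prod_def)

lemma mult_block_differences_unique:
  assumes "j < 4" "m \<in> M" "u \<in> mult_block j m" "v \<in> mult_block j m" "u \<noteq> v"
    and "j' < 4" "m' \<in> M" "u' \<in> mult_block j' m'" "v' \<in> mult_block j' m'"
    and diff: "u - v = u' - v'"
  shows "j = j' \<and> m = m' \<and> u = u'"
proof -
  obtain k l where kl: "k \<in> base_block j" "l \<in> base_block j" "u = (m * a k, label k)" "v = (m * a l, label l)"
    using assms(3,4) by (auto simp: mult_block_def)
  obtain k' l' where kl': "k' \<in> base_block j'" "l' \<in> base_block j'"
    "u' = (m' * a k', label k')" "v' = (m' * a l', label l')"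
    using assms(8,9) by (auto simp: mult_block_def)
  have "k \<noteq> l" using kl assms(5) by auto
  have "u' \<noteq> v'" using diff assms(5) by auto
  then have "k' \<noteq> l'" using kl' by auto
  have d: "m * (a k - a l) = m' * (a k' - a l')" and lab: "label k - label l = label k' - label l'"
    using diff kl kl' by (simp_all add: right_diff_distrib)
  have "coset6 (a k - a l) = coset6 (a k' - a l')"
    using d coset6_mult_C6[of m "a k - a l"] coset6_mult_C6[of m' "a k' - a l'"] M_subset assms(2,7)
    by auto
  then have kk: "(k', l') = (k, l) \<or> (k', l') = (l, k)"
    using pair_eq_if_label_diff_coset6_eq[OF assms(1) kl(1,2) \<open>k \<noteq> l\<close> assms(6) kl'(1,2) \<open>k' \<noteq> l'\<close> lab]
    by blast
  have nz: "a k - a l \<noteq> 0" using a_inj_base_block[OF assms(1) kl(1,2) \<open>k \<noteq> l\<close>] by simp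
  show ?thesis using kk
  proof
    assume "(k', l') = (k, l)"
    then have "m = m'" using d nz by simp
    then show ?thesis using \<open>(k', l') = (k, l)\<close> kl kl' base_block_disjoint by auto
  next
    assume "(k', l') = (l, k)"
    then have "m * (a k - a l) = (- m') * (a k - a l)" using d by (simp add: algebra_simps)
    then have "m = - m'" using mult_right_cancel[OF nz] by blast
    then show ?thesis using M_no_opposite assms(2,7) by auto
  qed
qed

lemma mult_block_differences_exist:
  assumes "d \<noteq> 0"
  obtains j m u v where "j < 4" "m \<in> M" "u \<in> mult_block j m" "v \<in> mult_block j m" "u - v = (d, c)"
proof -
  obtain k l where kl: "(k, l) \<in> set (diff_pairs c)" "coset6 d = coset6 (a k - a l)"
    using complete_rep6_covers[OF diffs_complete[of c] assms] by auto
  obtain j where j: "j < 4" "k \<in> base_block j" "l \<in> base_block j" "label k - label l = c"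
    using diff_pairs_in_base_block[OF kl(1)] by blast
  obtain w where w: "w \<in> C6" "d = (a k - a l) * w"
    using mem_coset6_self[of d] kl(2) by (auto simp: coset6_def)
  \<comment> \<open>If \<open>w \<notin> M\<close>, use \<open>-w\<close> and swap the pair: labels are their own negatives.\<close>
  consider "w \<in> M" | "- w \<in> M" using M_cover[OF w(1)] by blast
  then show thesis
  proof cases
    case 1
    show thesis
    proof (rule that[OF j(1) 1])
      show "(w * a k, label k) \<in> mult_block j w" "(w * a l, label l) \<in> mult_block j w"
        using j by (auto simp: mult_block_def)
      show "(w * a k, label k) - (w * a l, label l) = (d, c)"
        using w(2) j(4) by (simp add: algebra_simps)
    qed
  next
    case 2
    show thesis
    proof (rule that[OF j(1) 2])
      show "(- w * a l, label l) \<in> mult_block j (- w)" "(- w * a k, label k) \<in> mult_block j (- w)"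
        using j by (auto simp: mult_block_def)
      have "label l - label k = c" using j(4) minus_diff_eq[of "label k" "label l"] by simp
      then show "(- w * a l, label l) - (- w * a k, label k) = (d, c)"
        using w(2) by (simp add: algebra_simps)
    qed
  qed
qed

definition index_set :: "'a block_index set" where
  "index_set = {i. case i of Base j m p \<Rightarrow> j < 4 \<and> m \<in> M | Column t \<Rightarrow> True}"

fun block :: "'a block_index \<Rightarrow> ('a \<times> bit \<times> bit) set" where
  "block (Base j m p) = (+) p ` mult_block j m"
| "block (Column t) = {t} \<times> UNIV"

fun nest_point :: "'a block_index \<Rightarrow> 'a \<times> bit \<times> bit" where
  "nest_point (Base j m p) = p"
| "nest_point (Column t) = (t + 1, 0)"

definition offsets :: "'a block_index \<Rightarrow> ('a \<times> bit \<times> bit) set" where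
  "offsets i = (\<lambda>y. y - nest_point i) ` block i"

lemma mem_index_set [simp]:
  "Base j m p \<in> index_set \<longleftrightarrow> j < 4 \<and> m \<in> M" "Column t \<in> index_set"
  by (simp_all add: index_set_def)

lemma finite_index_set: "finite index_set"
proof (rule finite_subset)
  show "index_set \<subseteq> (\<lambda>(j, m, p). Base j m p) ` ({..<4} \<times> UNIV) \<union> range Column"
  proof
    fix i assume "i \<in> index_set"
    then show "i \<in> (\<lambda>(j, m, p). Base j m p) ` ({..<4} \<times> UNIV) \<union> range Column"
    proof (cases i)
      case (Base j m p)
      then have "i \<in> (\<lambda>(j, m, p). Base j m p) ` ({..<4} \<times> UNIV)"
        using \<open>i \<in> index_set\<close> by (intro rev_image_eqI[of "(j, m, p)"]) simp_all
      then show ?thesis by blast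
    qed simp
  qed
qed simp

lemma offsets_Base: "offsets (Base j m p) = mult_block j m"
  by (force simp: offsets_def image_image)

lemma mem_offsets_Column: "w \<in> offsets (Column t) \<longleftrightarrow> fst w = -1"
proof
  show "w \<in> offsets (Column t) \<Longrightarrow> fst w = -1" by (auto simp: offsets_def)
  assume "fst w = -1"
  then have "w = (t, snd w) - nest_point (Column t)" by (simp add: prod_eq_iff)
  moreover have "(t, snd w) \<in> block (Column t)" by simp
  ultimately show "w \<in> offsets (Column t)" unfolding offsets_def by (rule rev_image_eqI[rotated])
qed

lemma mem_block_iff_offset: "y \<in> block i \<longleftrightarrow> y - nest_point i \<in> offsets i"
  by (auto simp: offsets_def)

lemma card_block: "i \<in> index_set \<Longrightarrow> card (block i) = 4"
  by (cases i) (auto simp: card_image card_mult_block card_cartesian_product)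

lemma nest_point_notin_block: "i \<in> index_set \<Longrightarrow> nest_point i \<notin> block i"
  by (cases i) (simp_all add: translate_mem_iff zero_notin_mult_block)

lemma block_pair_exists:
  assumes "x \<noteq> y"
  shows "\<exists>i \<in> index_set. x \<in> block i \<and> y \<in> block i"
proof (cases "fst x = fst y")
  case True
  then show ?thesis by (intro bexI[of _ "Column (fst x)"]) (simp_all add: mem_Times_iff)
next
  case False
  then have "fst x - fst y \<noteq> 0" by simp
  then obtain j m u v where "j < 4" "m \<in> M" "u \<in> mult_block j m" "v \<in> mult_block j m"
    and "u - v = (fst x - fst y, snd x - snd y)"
    by (rule mult_block_differences_exist)
  moreover have "(fst x - fst y, snd x - snd y) = x - y" by (simp add: prod_eq_iff)
  ultimately have "x - (x - u) \<in> mult_block j m" "y - (x - u) \<in> mult_block j m"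
    by (simp_all add: algebra_simps)
  then show ?thesis
    using \<open>j < 4\<close> \<open>m \<in> M\<close> by (intro bexI[of _ "Base j m (x - u)"]) (simp_all add: translate_mem_iff)
qed

lemma block_fst_inj:
  assumes "Base j m p \<in> index_set" "x \<in> block (Base j m p)" "y \<in> block (Base j m p)" "fst x = fst y"
  shows "x = y"
proof -
  have "x - p = y - p"
    using mult_block_fst_inj[of j m "x - p" "y - p"] assms by (simp add: translate_mem_iff)
  then show ?thesis by simp
qed

lemma block_pair_unique:
  assumes "x \<noteq> y" "i \<in> index_set" "i' \<in> index_set"
    and "x \<in> block i" "y \<in> block i" "x \<in> block i'" "y \<in> block i'"
  shows "i = i'"
proof (cases i)
  case i: (Base j m p)
  show ?thesis
  proof (cases i')
    case i': (Base j' m' p')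
    have "j = j' \<and> m = m' \<and> x - p = x - p'"
      using mult_block_differences_unique[of j m "x - p" "y - p" j' m' "x - p'" "y - p'"] assms i i'
      by (simp add: translate_mem_iff)
    then show ?thesis using i i' by simp
  next
    case (Column t')
    then have "fst x = fst y" using assms(6,7) by auto
    then show ?thesis using block_fst_inj assms i by blast
  qed
next
  case i: (Column t)
  show ?thesis
  proof (cases i')
    case (Base j' m' p')
    moreover have "fst x = fst y" using assms(4,5) i by auto
    ultimately show ?thesis using block_fst_inj assms by blast
  next
    case (Column t')
    then show ?thesis using assms(4,6) i by auto
  qed
qed

lemma offsets_unique:
  assumes "i \<in> index_set" "i' \<in> index_set" "nest_point i = nest_point i'"
    and "w \<in> offsets i" "w \<in> offsets i'"
  shows "i = i'"
proof (cases i)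
  case i: (Base j m p)
  then have "fst w \<notin> C6" using assms(1,4) fst_mult_block_notin_C6[of j m w] by (simp add: offsets_Base)
  show ?thesis
  proof (cases i')
    case (Base j' m' p')
    then show ?thesis using i assms mult_block_unique[of j m w j' m'] by (simp add: offsets_Base)
  next
    case (Column t')
    then show ?thesis using assms(5) \<open>fst w \<notin> C6\<close> minus_one_C6 by (simp add: mem_offsets_Column)
  qed
next
  case i: (Column t)
  show ?thesis
  proof (cases i')
    case (Base j' m' p')
    then show ?thesis
      using i assms fst_mult_block_notin_C6[of j' m' w] minus_one_C6
      by (simp add: offsets_Base mem_offsets_Column)
  next
    case (Column t')
    then show ?thesis using i assms(3) by simp
  qed
qed

lemma offsets_not_opposite:
  assumes "i \<in> index_set" "i' \<in> index_set" "w \<in> offsets i" "- w \<in> offsets i'"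
  shows False
proof (cases i)
  case i: (Base j m p)
  show ?thesis
  proof (cases i')
    case (Base j' m' p')
    then show ?thesis using i assms mult_block_not_opposite[of j m w j' m'] by (simp add: offsets_Base)
  next
    case (Column t')
    then have "fst w = 1" using assms(4) by (simp add: mem_offsets_Column)
    then show ?thesis using i assms(1,3) fst_mult_block_notin_C6[of j m w] by (simp add: offsets_Base)
  qed
next
  case i: (Column t)
  then have "fst (- w) = 1" using assms(3) by (simp add: mem_offsets_Column)
  show ?thesis
  proof (cases i')
    case (Base j' m' p')
    then show ?thesis
      using \<open>fst (- w) = 1\<close> assms(2,4) fst_mult_block_notin_C6[of j' m' "- w"] by (simp add: offsets_Base)
  next
    case (Column t')
    then show ?thesis using \<open>fst (- w) = 1\<close> assms(4) one_neq_minus_one by (simp add: mem_offsets_Column)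
  qed
qed

lemma nest_point_unique:
  assumes "i \<in> index_set" "i' \<in> index_set" "nest_point i = x" "y \<in> block i"
    and "nest_point i' = x \<and> y \<in> block i' \<or> nest_point i' = y \<and> x \<in> block i'"
  shows "i = i'"
  using assms(5)
proof
  assume i': "nest_point i' = x \<and> y \<in> block i'"
  then have "y - x \<in> offsets i" "y - x \<in> offsets i'"
    using assms(3,4) by (auto simp: mem_block_iff_offset)
  then show ?thesis using offsets_unique[OF assms(1,2)] assms(3) i' by auto
next
  assume "nest_point i' = y \<and> x \<in> block i'"
  then have "y - x \<in> offsets i" "- (y - x) \<in> offsets i'"
    using assms(3,4) by (auto simp: mem_block_iff_offset)
  then show ?thesis using offsets_not_opposite[OF assms(1,2)] by blast
qed

theorem nested_bibd_blocks:
  "nested_bibd (UNIV :: ('a \<times> bit \<times> bit) set) (image_mset block (mset_set index_set)) (4 * CARD('a))"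
proof (rule nested_bibd_of_indexed_blocks)
  show "card (UNIV :: ('a \<times> bit \<times> bit) set) = 4 * CARD('a)" by simp
qed (use finite_index_set card_block nest_point_notin_block block_pair_exists block_pair_unique
      nest_point_unique in auto)

end

theorem mainTheorem17:
  fixes a :: "nat \<Rightarrow> 'a::{finite,field}" and n :: nat
  assumes q: "CARD('a) = 12 * n + 1"
    and nz: "\<forall>i \<in> {1..16}. a i \<noteq> 0"
    and D00: "complete_rep6 [a 1 - a 2, a 5 - a 6, a 10 - a 11, a 10 - a 12, a 11 - a 12, a 15 - a 16]"
    and D01: "complete_rep6 [a 1 - a 3, a 2 - a 3, a 5 - a 7, a 6 - a 7, a 14 - a 15, a 14 - a 16]"
    and D10: "complete_rep6 [a 1 - a 4, a 2 - a 4, a 5 - a 8, a 6 - a 8, a 13 - a 15, a 13 - a 16]"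
    and D11: "complete_rep6 [a 3 - a 4, a 7 - a 8, a 9 - a 10, a 9 - a 11, a 9 - a 12, a 13 - a 14]"
    and U00: "partial_rep6 [a 1, a 2, a 5, a 6, a 9]"
    and U01: "partial_rep6 [a 3, a 7, a 13]"
    and U10: "partial_rep6 [a 4, a 8, a 14]"
    and U11: "partial_rep6 [a 10, a 11, a 12, a 15, a 16]"
  shows "\<exists>(X :: nat set) (B :: nat set multiset). nested_bibd X B (4 * CARD('a))"
proof -
  obtain M :: "'a set"
    where M: "M \<subseteq> C6" "\<And>c. c \<in> C6 \<Longrightarrow> c \<in> M \<or> -c \<in> M" "\<And>c. c \<in> M \<Longrightarrow> -c \<notin> M"
    using C6_sign_representatives[OF minus_one_in_C6[OF q]] by blast
  interpret nested_construction a M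
  proof
    show "complete_rep6 (map (\<lambda>(k, l). a k - a l) (diff_pairs c))" for c
      using D00 D01 D10 D11 bit_pair_cases[of c] by (auto simp: diff_pairs_def)
    show "partial_rep6 (map a (label_class c))" for c
      using U00 U01 U10 U11 bit_pair_cases[of c] by (auto simp: label_class_simps)
  qed (use minus_one_in_C6[OF q] M in auto)
  obtain f where "bij_betw f (UNIV :: ('a \<times> bit \<times> bit) set) {0..<4 * CARD('a)}"
    using ex_bij_betw_finite_nat[of "UNIV :: ('a \<times> bit \<times> bit) set"] by (auto simp: mult.commute)
  then show ?thesis using nested_bibd_image[OF _ nested_bibd_blocks] by blast
qed

end
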